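(* Let $(X,\preceq,\{H_n\})$ be a half-space order such that $(X,\preceq)$ is globally hyperbolic with respect to a given topology on $X$. Let $H$ be a group acting effectively and unboundedly by quasi-automorphisms on $(X,\preceq,\{H_n\})$, and let $T_X:H\to\mathbb{R}$ be the associated translation number. Then for every subgroup $G<H$ the following are equivalent: (i) $T_X|_G\equiv 0$; (ii) every $G$-orbit in $X$ is bounded; (iii) there exists a bounded $G$-orbit in $X$.
   Context: A half-space filtration of $X$ is $\{H_n\}_{n\in\mathbb{Z}}$ with $H_{n+1}\subsetneq H_n$, $\bigcap H_n=\emptyset$, $\bigcup H_n=X$; height $h(a)=\sup\{n: a\in H_n\}$, $h(a,b)=h(a)-h(b)$. A half-space order $(X,\preceq,\{H_n\})$: $(X,\preceq)$ a poset, $\{H_n\}$ a half-space filtration and for a constant $w$, $h(a,b)\geq w\Rightarrow a\succeq b$. An action is by quasi-automorphisms if for some $d$, $|h(ga,gb)-h(a,b)|\leq d$ for all $g,a,b$; unbounded if for some $g,a$, $h(g^na)\to\pm\infty$ as $n\to\pm\infty$. The translation number is $T_X(g)=\lim_{n\to\infty}h(g^na,a)/n$ (independent of $a$). $(X,\preceq)$ is globally hyperbolic if the intervals $[x,y]=\{z:x\preceq z\preceq y\}$ are compact and the sets $[x,\infty)=\{z: x\preceq z\}$, $(-\infty,x]=\{z:z\preceq x\}$ are closed. A subset of $X$ is bounded if its closure is compact. *)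

theory Defs
  imports "HOL-Analysis.Analysis" "HOL-Algebra.Group_Action"
begin

definition half_space_filtration :: "(int \<Rightarrow> 'x set) \<Rightarrow> bool" where
  "half_space_filtration H \<longleftrightarrow>
     (\<forall>n. H (n + 1) \<subset> H n) \<and> (\<Inter>n. H n) = {} \<and> (\<Union>n. H n) = UNIV"

definition height :: "(int \<Rightarrow> 'x set) \<Rightarrow> 'x \<Rightarrow> int" where
  "height H a = Sup {n. a \<in> H n}"

definition rel_height :: "(int \<Rightarrow> 'x set) \<Rightarrow> 'x \<Rightarrow> 'x \<Rightarrow> int" where
  "rel_height H a b = height H a - height H b"

definition is_poset :: "('x \<Rightarrow> 'x \<Rightarrow> bool) \<Rightarrow> bool" where
  "is_poset leq \<longleftrightarrow> partial_order_on UNIV {(a, b). leq a b}"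

definition half_space_order :: "('x \<Rightarrow> 'x \<Rightarrow> bool) \<Rightarrow> (int \<Rightarrow> 'x set) \<Rightarrow> bool" where
  "half_space_order leq H \<longleftrightarrow> is_poset leq \<and> half_space_filtration H \<and>
     (\<exists>w::int. \<forall>a b. rel_height H a b \<ge> w \<longrightarrow> leq b a)"

definition globally_hyperbolic :: "('x::topological_space \<Rightarrow> 'x \<Rightarrow> bool) \<Rightarrow> bool" where
  "globally_hyperbolic leq \<longleftrightarrow>
     (\<forall>x y. compact {z. leq x z \<and> leq z y}) \<and>
     (\<forall>x. closed {z. leq x z}) \<and> (\<forall>x. closed {z. leq z x})"

definition top_bounded :: "'x::topological_space set \<Rightarrow> bool" where
  "top_bounded S \<longleftrightarrow> compact (closure S)"

definition quasi_aut_action ::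
    "('g, 'b) monoid_scheme \<Rightarrow> ('g \<Rightarrow> 'x \<Rightarrow> 'x) \<Rightarrow> (int \<Rightarrow> 'x set) \<Rightarrow> bool" where
  "quasi_aut_action G \<phi> H \<longleftrightarrow>
     (\<exists>d::int. \<forall>g \<in> carrier G. \<forall>a b.
        \<bar>rel_height H (\<phi> g a) (\<phi> g b) - rel_height H a b\<bar> \<le> d)"

definition unbounded_action ::
    "('g, 'b) monoid_scheme \<Rightarrow> ('g \<Rightarrow> 'x \<Rightarrow> 'x) \<Rightarrow> (int \<Rightarrow> 'x set) \<Rightarrow> bool" where
  "unbounded_action G \<phi> H \<longleftrightarrow>
     (\<exists>g \<in> carrier G. \<exists>a.
        filterlim (\<lambda>n::int. height H (\<phi> (g [^]\<^bsub>G\<^esub> n) a)) at_top at_top \<and>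
        filterlim (\<lambda>n::int. height H (\<phi> (g [^]\<^bsub>G\<^esub> n) a)) at_bot at_bot)"

text \<open>Translation number, computed at a fixed base point (it is independent of it).\<close>
definition translation_number ::
    "('g, 'b) monoid_scheme \<Rightarrow> ('g \<Rightarrow> 'x \<Rightarrow> 'x) \<Rightarrow> (int \<Rightarrow> 'x set) \<Rightarrow> 'g \<Rightarrow> real" where
  "translation_number G \<phi> H g =
     (let a = (SOME a::'x. True) in
      lim (\<lambda>n::nat. real_of_int (rel_height H (\<phi> (g [^]\<^bsub>G\<^esub> n) a) a) / real n))"

end

theory Submission
  imports Defs
begin

text \<open>
  Global hyperbolicity turns topological boundedness into boundedness of heights: a set of
  bounded height lies in an order interval \<open>[p, q]\<close>, which is compact; conversely the open
  sets \<open>{y. \<not> p \<preceq> y}\<close> cover \<open>X\<close> and the height is bounded above on each of them, so it is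
  bounded above on every compact set (and dually below).

  For a quasi-automorphic action with defect \<open>d\<close>, \<open>g \<mapsto> h(g a, a)\<close> is a quasi-morphism of
  defect \<open>d\<close>, so \<open>h(g\<^sup>n a, a) / n\<close> converges and \<open>\<bar>T(g) - h(g a, a)\<bar> \<le> d\<close>. Hence \<open>T\<close> vanishes
  on \<open>G\<close> iff the heights of the orbit \<open>G a\<close> are bounded; and this does not depend on the orbit,
  since \<open>h(g y, g x)\<close> stays within \<open>d\<close> of \<open>h(y, x)\<close>.
\<close>

lemma half_space_filtration_antimono:
  assumes "half_space_filtration H" and "n \<le> m"
  shows "H m \<subseteq> H n"
proof -
  have shrink: "H (k + 1) \<subseteq> H k" for k
    using assms(1) unfolding half_space_filtration_def by blast
  from assms(2) show ?thesis
  proof (induction m rule: int_ge_induct)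
    case (step m)
    then show ?case
      using shrink by blast
  qed simp
qed

lemma mem_iff_le_height:
  assumes "half_space_filtration H"
  shows "a \<in> H n \<longleftrightarrow> n \<le> height H a"
proof -
  let ?S = "{n. a \<in> H n}"
  have "?S \<noteq> {}"
    using assms unfolding half_space_filtration_def by blast
  obtain N where N: "a \<notin> H N"
    using assms unfolding half_space_filtration_def by blast
  have down_closed: "a \<in> H k" if "a \<in> H n" "k \<le> n" for k n
    using half_space_filtration_antimono[OF assms that(2)] that(1) by blast
  have "bdd_above ?S"
  proof (rule bdd_aboveI)
    fix k
    assume "k \<in> ?S"
    then show "k \<le> N"
      using N down_closed[of k N] by (cases "N \<le> k") auto
  qed
  show ?thesis
  proof
    assume "a \<in> H n"
    then show "n \<le> height H a"
      unfolding height_def using \<open>bdd_above ?S\<close> by (simp add: cSup_upper)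
  next
    assume "n \<le> height H a"
    show "a \<in> H n"
    proof (rule ccontr)
      assume "a \<notin> H n"
      then have "k \<le> n - 1" if "k \<in> ?S" for k
        using down_closed[of k n] that by force
      then have "height H a \<le> n - 1"
        unfolding height_def using \<open>?S \<noteq> {}\<close> by (meson cSup_least)
      with \<open>n \<le> height H a\<close> show False by simp
    qed
  qed
qed

lemma height_surj:
  assumes "half_space_filtration H"
  shows "\<exists>a. height H a = n"
proof -
  have "H (n + 1) \<subset> H n"
    using assms unfolding half_space_filtration_def by blast
  then obtain a where "a \<in> H n" "a \<notin> H (n + 1)" by blast
  then have "height H a = n"
    using mem_iff_le_height[OF assms] by fastforce
  then show ?thesis ..
qed

lemma half_space_order_threshold:
  assumes "half_space_order leq H"
  obtains w where "\<And>a b. rel_height H a b \<ge> w \<Longrightarrow> leq b a"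
    and "\<And>a b. rel_height H a b \<ge> max w 1 \<Longrightarrow> \<not> leq a b"
proof -
  obtain w where w: "\<And>a b. rel_height H a b \<ge> w \<Longrightarrow> leq b a"
    using assms unfolding half_space_order_def by blast
  have "is_poset leq"
    using assms unfolding half_space_order_def by blast
  have "\<not> leq a b" if "rel_height H a b \<ge> max w 1" for a b
  proof
    assume "leq a b"
    moreover have "leq b a"
      using w that by simp
    ultimately have "a = b"
      using \<open>is_poset leq\<close> unfolding is_poset_def partial_order_on_def antisym_def by blast
    with that show False
      unfolding rel_height_def by simp
  qed
  with w show ?thesis
    using that by blast
qed

lemma bdd_above_image_if_locally_bdd_above:
  fixes f :: "'a::topological_space \<Rightarrow> 'b::lattice"
  assumes "compact K"
    and "\<And>z. z \<in> K \<Longrightarrow> \<exists>U. open U \<and> z \<in> U \<and> bdd_above (f ` U)"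
  shows "bdd_above (f ` K)"
proof -
  obtain U where U: "\<forall>z\<in>K. open (U z) \<and> z \<in> U z \<and> bdd_above (f ` U z)"
    using bchoice[of K "\<lambda>z U. open U \<and> z \<in> U \<and> bdd_above (f ` U)"] assms(2) by auto
  obtain C where "C \<subseteq> K" "finite C" "K \<subseteq> (\<Union>z\<in>C. U z)"
  proof (rule compactE_image[OF assms(1), of K U])
    show "open (U z)" if "z \<in> K" for z
      using U that by simp
    show "K \<subseteq> (\<Union>z\<in>K. U z)"
      using U by fast
  qed
  have "bdd_above (\<Union>z\<in>C. f ` U z)"
    unfolding bdd_above_UN[OF \<open>finite C\<close>] using \<open>C \<subseteq> K\<close> U by fast
  moreover have "f ` K \<subseteq> (\<Union>z\<in>C. f ` U z)"
    using \<open>K \<subseteq> (\<Union>z\<in>C. U z)\<close> by blast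
  ultimately show ?thesis
    by (rule bdd_above_mono)
qed

definition height_bounded :: "(int \<Rightarrow> 'x set) \<Rightarrow> 'x set \<Rightarrow> bool" where
  "height_bounded H S \<longleftrightarrow> bdd_above (height H ` S) \<and> bdd_below (height H ` S)"

lemma height_bounded_iff:
  "height_bounded H S \<longleftrightarrow> (\<exists>m M. \<forall>z\<in>S. m \<le> height H z \<and> height H z \<le> M)"
  unfolding height_bounded_def bdd_above_def bdd_below_def by auto

lemma height_bounded_subset:
  assumes "height_bounded H S" and "T \<subseteq> S"
  shows "height_bounded H T"
proof -
  have sub: "height H ` T \<subseteq> height H ` S"
    using assms(2) by (rule image_mono)
  show ?thesis
    using assms(1) bdd_above_mono[OF _ sub] bdd_below_mono[OF _ sub]
    unfolding height_bounded_def by metis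
qed

lemma top_bounded_if_height_bounded:
  assumes "half_space_order leq H" and "globally_hyperbolic leq"
    and "height_bounded H S"
  shows "top_bounded S"
proof -
  have hsf: "half_space_filtration H"
    using assms(1) unfolding half_space_order_def by blast
  obtain w where w: "\<And>a b. rel_height H a b \<ge> w \<Longrightarrow> leq b a"
    using assms(1) unfolding half_space_order_def by blast
  obtain m M where bounds: "\<And>z. z \<in> S \<Longrightarrow> m \<le> height H z \<and> height H z \<le> M"
    using assms(3) unfolding height_bounded_iff by blast
  obtain p q where p: "height H p = m - \<bar>w\<bar>" and q: "height H q = M + \<bar>w\<bar>"
    using height_surj[OF hsf] by metis
  have "leq p z \<and> leq z q" if "z \<in> S" for z
  proof -
    have "w \<le> rel_height H z p" "w \<le> rel_height H q z"
      using bounds[OF that] unfolding rel_height_def p q by arith+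
    then show ?thesis
      using w by blast
  qed
  then have "S \<subseteq> {z. leq p z \<and> leq z q}"
    by blast
  moreover have "closed {z. leq p z \<and> leq z q}"
    using assms(2) unfolding globally_hyperbolic_def Collect_conj_eq by blast
  ultimately have "closure S \<subseteq> {z. leq p z \<and> leq z q}"
    by (rule closure_minimal)
  moreover have "compact {z. leq p z \<and> leq z q}"
    using assms(2) unfolding globally_hyperbolic_def by blast
  ultimately have "compact ({z. leq p z \<and> leq z q} \<inter> closure S)"
    by (simp add: compact_Int_closed)
  with \<open>closure S \<subseteq> {z. leq p z \<and> leq z q}\<close> show ?thesis
    unfolding top_bounded_def by (simp add: Int_absorb1)
qed

lemma half_space_order_locally_height_bounded:
  assumes "half_space_order leq H" and "globally_hyperbolic leq"
  shows "\<exists>U. open U \<and> z \<in> U \<and> bdd_above (height H ` U)"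
    and "\<exists>U. open U \<and> z \<in> U \<and> bdd_below (height H ` U)"
proof -
  have hsf: "half_space_filtration H"
    using assms(1) unfolding half_space_order_def by blast
  obtain w where w: "\<And>a b. rel_height H a b \<ge> w \<Longrightarrow> leq b a"
    and not_leq: "\<And>a b. rel_height H a b \<ge> max w 1 \<Longrightarrow> \<not> leq a b"
    using half_space_order_threshold[OF assms(1)] by blast
  have "open {y. \<not> leq p y}" "open {y. \<not> leq y p}" for p
    using assms(2) unfolding globally_hyperbolic_def Collect_neg_eq by (auto intro: open_Compl)
  moreover obtain p where "height H p = height H z + max w 1"
    using height_surj[OF hsf] by blast
  then have "z \<in> {y. \<not> leq p y}"
    using not_leq[of p z] unfolding rel_height_def by simp
  moreover have "bdd_above (height H ` {y. \<not> leq p y})"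
  proof (rule bdd_aboveI2)
    show "height H y \<le> height H p + w" if "y \<in> {y. \<not> leq p y}" for y
      using w[of y p] that unfolding rel_height_def by fastforce
  qed
  ultimately show "\<exists>U. open U \<and> z \<in> U \<and> bdd_above (height H ` U)"
    by metis
  obtain q where "height H q = height H z - max w 1"
    using height_surj[OF hsf] by blast
  then have "z \<in> {y. \<not> leq y q}"
    using not_leq[of z q] unfolding rel_height_def by simp
  moreover have "bdd_below (height H ` {y. \<not> leq y q})"
  proof (rule bdd_belowI2)
    show "height H q - w \<le> height H y" if "y \<in> {y. \<not> leq y q}" for y
      using w[of q y] that unfolding rel_height_def by fastforce
  qed
  ultimately show "\<exists>U. open U \<and> z \<in> U \<and> bdd_below (height H ` U)"
    using \<open>open {y. \<not> leq y q}\<close> by metis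
qed

lemma height_bounded_if_top_bounded:
  assumes "half_space_order leq H" and "globally_hyperbolic leq"
    and "top_bounded S"
  shows "height_bounded H S"
proof -
  have "compact (closure S)"
    using assms(3) unfolding top_bounded_def .
  have "bdd_above (height H ` closure S)"
    by (rule bdd_above_image_if_locally_bdd_above[OF \<open>compact (closure S)\<close>])
      (rule half_space_order_locally_height_bounded(1)[OF assms(1,2)])
  moreover have "bdd_above ((\<lambda>y. - height H y) ` closure S)"
  proof (rule bdd_above_image_if_locally_bdd_above[OF \<open>compact (closure S)\<close>])
    fix z
    obtain U where "open U" "z \<in> U" "bdd_below (height H ` U)"
      using half_space_order_locally_height_bounded(2)[OF assms(1,2)] by metis
    then show "\<exists>U. open U \<and> z \<in> U \<and> bdd_above ((\<lambda>y. - height H y) ` U)"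
      unfolding bdd_above_uminus_image by auto
  qed
  ultimately have "height_bounded H (closure S)"
    unfolding height_bounded_def bdd_above_uminus_image ..
  then show ?thesis
    using closure_subset by (rule height_bounded_subset)
qed

lemma top_bounded_iff_height_bounded:
  assumes "half_space_order leq H" and "globally_hyperbolic leq"
  shows "top_bounded S \<longleftrightarrow> height_bounded H S"
  using top_bounded_if_height_bounded[OF assms] height_bounded_if_top_bounded[OF assms] by blast

lemma quasi_homogeneous_ratio_estimate:
  fixes u :: "nat \<Rightarrow> real"
  assumes quasi_hom: "\<And>n m. \<bar>u (n * m) - real m * u n\<bar> \<le> real m * d"
    and "n \<ge> 1" "m \<ge> 1"
  shows "\<bar>u (n * m) / real (n * m) - u n / real n\<bar> \<le> d / real n"
proof -
  have "\<bar>u (n * m) / real (n * m) - u n / real n\<bar> = \<bar>u (n * m) - real m * u n\<bar> / real (n * m)"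
    using assms(2,3) by (simp add: field_simps)
  also have "\<dots> \<le> real m * d / real (n * m)"
    by (rule divide_right_mono[OF quasi_hom]) simp
  also have "\<dots> = d / real n"
    using assms(3) by simp
  finally show ?thesis .
qed

lemma quasi_homogeneous_Cauchy:
  fixes u :: "nat \<Rightarrow> real"
  assumes quasi_hom: "\<And>n m. \<bar>u (n * m) - real m * u n\<bar> \<le> real m * d"
  shows "Cauchy (\<lambda>n. u n / real n)"
proof (rule CauchyI)
  fix e :: real
  assume "0 < e"
  have "0 \<le> d"
    using quasi_hom[of 1 1] by simp
  define N where "N = nat \<lceil>2 * d / e\<rceil> + 1"
  have "N \<ge> 1" "2 * d / e < real N"
    unfolding N_def by linarith+
  then have small: "2 * d / real N < e"
    using \<open>0 < e\<close> by (simp add: field_simps)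
  have "\<bar>u m / real m - u n / real n\<bar> < e" if "m \<ge> N" "n \<ge> N" for m n
  proof -
    have "\<bar>u (m * n) / real (m * n) - u m / real m\<bar> \<le> d / real m"
      using quasi_homogeneous_ratio_estimate[OF quasi_hom] that \<open>N \<ge> 1\<close> by simp
    moreover have "\<bar>u (m * n) / real (m * n) - u n / real n\<bar> \<le> d / real n"
      using quasi_homogeneous_ratio_estimate[OF quasi_hom, of n m] that \<open>N \<ge> 1\<close>
      by (simp add: mult.commute)
    moreover have "d / real m \<le> d / real N" "d / real n \<le> d / real N"
      using that \<open>N \<ge> 1\<close> \<open>0 \<le> d\<close> by (auto intro: divide_left_mono)
    ultimately show ?thesis
      using small by linarith
  qed
  then show "\<exists>N. \<forall>m\<ge>N. \<forall>n\<ge>N. norm (u m / real m - u n / real n) < e"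
    by auto
qed

lemma quasi_homogeneous_lim:
  fixes u :: "nat \<Rightarrow> real"
  assumes quasi_hom: "\<And>n m. \<bar>u (n * m) - real m * u n\<bar> \<le> real m * d"
  shows "\<bar>lim (\<lambda>n. u n / real n) - u 1\<bar> \<le> d"
proof (rule Lim_bounded)
  show "(\<lambda>n. \<bar>u n / real n - u 1\<bar>) \<longlonglongrightarrow> \<bar>lim (\<lambda>n. u n / real n) - u 1\<bar>"
    using quasi_homogeneous_Cauchy[OF quasi_hom]
    by (intro tendsto_intros) (simp add: Cauchy_convergent_iff convergent_LIMSEQ_iff)
  show "\<forall>n\<ge>1. \<bar>u n / real n - u 1\<bar> \<le> d"
    using quasi_homogeneous_ratio_estimate[OF quasi_hom, of 1] by simp
qed

lemma bounded_over_n_tendsto_0: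
  fixes u :: "nat \<Rightarrow> real"
  assumes "\<And>n. \<bar>u n\<bar> \<le> B"
  shows "(\<lambda>n. u n / real n) \<longlonglongrightarrow> 0"
proof (rule tendsto_0_le[OF lim_inverse_n', of _ B])
  show "\<forall>\<^sub>F n in sequentially. norm (u n / real n) \<le> norm (1 / real n) * B"
    using assms by (simp add: divide_right_mono)
qed

lemma subgroup_nat_pow_closed:
  assumes "subgroup G Gr" and "g \<in> G"
  shows "g [^]\<^bsub>Gr\<^esub> (n :: nat) \<in> G"
  by (induction n) (use assms in \<open>simp_all add: subgroup.one_closed subgroup.m_closed\<close>)

lemma group_action_group: "group_action G E \<phi> \<Longrightarrow> group G"
  unfolding group_action_def group_hom_def by blast

lemma rel_height_orbit_quasi_additive:
  assumes "group_action Gr UNIV \<phi>"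
    and quasi_aut: "\<And>g a b. g \<in> carrier Gr \<Longrightarrow>
      \<bar>rel_height H (\<phi> g a) (\<phi> g b) - rel_height H a b\<bar> \<le> d"
    and "x \<in> carrier Gr" and "y \<in> carrier Gr"
  shows "\<bar>rel_height H (\<phi> (y \<otimes>\<^bsub>Gr\<^esub> x) a) a - rel_height H (\<phi> y a) a
           - rel_height H (\<phi> x a) a\<bar> \<le> d"
proof -
  have "\<phi> (y \<otimes>\<^bsub>Gr\<^esub> x) a = \<phi> y (\<phi> x a)"
    using group_action.composition_rule[OF assms(1)] assms(3,4) by simp
  moreover have "\<bar>rel_height H (\<phi> y (\<phi> x a)) (\<phi> y a) - rel_height H (\<phi> x a) a\<bar> \<le> d"
    using quasi_aut assms(4) by blast
  ultimately show ?thesis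
    unfolding rel_height_def by simp
qed

lemma rel_height_orbit_pow:
  assumes "group_action Gr UNIV \<phi>"
    and quasi_aut: "\<And>g a b. g \<in> carrier Gr \<Longrightarrow>
      \<bar>rel_height H (\<phi> g a) (\<phi> g b) - rel_height H a b\<bar> \<le> d"
    and "x \<in> carrier Gr"
  shows "\<bar>rel_height H (\<phi> (x [^]\<^bsub>Gr\<^esub> m) a) a - int m * rel_height H (\<phi> x a) a\<bar> \<le> int m * d"
proof (induction m)
  case 0
  have "\<phi> \<one>\<^bsub>Gr\<^esub> a = a"
    using group_action.id_eq_one[OF assms(1)] by (metis UNIV_I restrict_apply')
  then show ?case
    by (simp add: rel_height_def)
next
  case (Suc m)
  interpret group Gr
    using group_action_group[OF assms(1)] .
  have "\<bar>rel_height H (\<phi> (x [^]\<^bsub>Gr\<^esub> m \<otimes>\<^bsub>Gr\<^esub> x) a) a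
          - rel_height H (\<phi> (x [^]\<^bsub>Gr\<^esub> m) a) a - rel_height H (\<phi> x a) a\<bar> \<le> d"
    using rel_height_orbit_quasi_additive[OF assms(1) quasi_aut] assms(3) by simp
  with Suc.IH show ?case
    unfolding abs_le_iff by (simp add: algebra_simps)
qed

definition base_point :: 'x where
  "base_point = (SOME a. True)"

lemma translation_number_base_point:
  "translation_number Gr \<phi> H g =
     lim (\<lambda>n. real_of_int (rel_height H (\<phi> (g [^]\<^bsub>Gr\<^esub> n) base_point) base_point) / real n)"
  unfolding translation_number_def base_point_def Let_def ..

lemma translation_number_approx:
  assumes "group_action Gr UNIV \<phi>"
    and quasi_aut: "\<And>g a b. g \<in> carrier Gr \<Longrightarrow>
      \<bar>rel_height H (\<phi> g a) (\<phi> g b) - rel_height H a b\<bar> \<le> d"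
    and "g \<in> carrier Gr"
  shows "\<bar>translation_number Gr \<phi> H g - rel_height H (\<phi> g base_point) base_point\<bar> \<le> d"
proof -
  interpret group Gr
    using group_action_group[OF assms(1)] .
  define u where "u n = real_of_int (rel_height H (\<phi> (g [^]\<^bsub>Gr\<^esub> n) base_point) base_point)"
    for n :: nat
  have "\<bar>u (n * m) - real m * u n\<bar> \<le> real m * real_of_int d" for n m
  proof -
    have "\<bar>rel_height H (\<phi> ((g [^]\<^bsub>Gr\<^esub> n) [^]\<^bsub>Gr\<^esub> m) base_point) base_point
            - int m * rel_height H (\<phi> (g [^]\<^bsub>Gr\<^esub> n) base_point) base_point\<bar> \<le> int m * d"
      using rel_height_orbit_pow[OF assms(1) quasi_aut] assms(3) by simp
    then have "\<bar>rel_height H (\<phi> (g [^]\<^bsub>Gr\<^esub> (n * m)) base_point) base_point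
            - int m * rel_height H (\<phi> (g [^]\<^bsub>Gr\<^esub> n) base_point) base_point\<bar> \<le> int m * d"
      using assms(3) by (simp add: nat_pow_pow)
    then have "real_of_int \<bar>rel_height H (\<phi> (g [^]\<^bsub>Gr\<^esub> (n * m)) base_point) base_point
            - int m * rel_height H (\<phi> (g [^]\<^bsub>Gr\<^esub> n) base_point) base_point\<bar> \<le> real_of_int (int m * d)"
      by linarith
    then show ?thesis
      unfolding u_def by simp
  qed
  then have "\<bar>lim (\<lambda>n. u n / real n) - u 1\<bar> \<le> d"
    by (rule quasi_homogeneous_lim)
  then show ?thesis
    unfolding translation_number_base_point u_def using assms(3) by simp
qed

lemma translation_number_eq_0_if_height_bounded:
  assumes "height_bounded H (range (\<lambda>n::nat. \<phi> (g [^]\<^bsub>Gr\<^esub> n) base_point))"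
  shows "translation_number Gr \<phi> H g = 0"
proof -
  obtain m M where bounds: "\<And>n::nat. m \<le> height H (\<phi> (g [^]\<^bsub>Gr\<^esub> n) base_point)
      \<and> height H (\<phi> (g [^]\<^bsub>Gr\<^esub> n) base_point) \<le> M"
    using assms unfolding height_bounded_iff by auto
  have "\<bar>real_of_int (rel_height H (\<phi> (g [^]\<^bsub>Gr\<^esub> n) base_point) base_point)\<bar>
          \<le> real_of_int (\<bar>m - height H base_point\<bar> + \<bar>M - height H base_point\<bar>)" for n :: nat
    using bounds[of n] unfolding rel_height_def by linarith
  then show ?thesis
    unfolding translation_number_base_point by (intro limI bounded_over_n_tendsto_0)
qed

lemma translation_numbers_vanish_iff:
  assumes "group_action Gr UNIV \<phi>"
    and quasi_aut: "\<And>g a b. g \<in> carrier Gr \<Longrightarrow>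
      \<bar>rel_height H (\<phi> g a) (\<phi> g b) - rel_height H a b\<bar> \<le> d"
    and "subgroup G Gr"
  shows "(\<forall>g\<in>G. translation_number Gr \<phi> H g = 0)
           \<longleftrightarrow> height_bounded H {\<phi> g base_point | g. g \<in> G}"
proof
  assume "\<forall>g\<in>G. translation_number Gr \<phi> H g = 0"
  then have "\<bar>rel_height H (\<phi> g base_point) base_point\<bar> \<le> d" if "g \<in> G" for g
    using translation_number_approx[OF assms(1) quasi_aut] subgroup.mem_carrier[OF assms(3)] that
    by fastforce
  then have "\<forall>z \<in> {\<phi> g base_point | g. g \<in> G}.
      height H base_point - d \<le> height H z \<and> height H z \<le> height H base_point + d"
    unfolding rel_height_def by fastforce
  then show "height_bounded H {\<phi> g base_point | g. g \<in> G}"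
    unfolding height_bounded_iff by blast
next
  assume bounded: "height_bounded H {\<phi> g base_point | g. g \<in> G}"
  show "\<forall>g\<in>G. translation_number Gr \<phi> H g = 0"
  proof
    fix g
    assume "g \<in> G"
    then have "g [^]\<^bsub>Gr\<^esub> n \<in> G" for n :: nat
      using subgroup_nat_pow_closed[OF assms(3)] by blast
    then have "range (\<lambda>n::nat. \<phi> (g [^]\<^bsub>Gr\<^esub> n) base_point) \<subseteq> {\<phi> g base_point | g. g \<in> G}"
      by auto
    then show "translation_number Gr \<phi> H g = 0"
      by (intro translation_number_eq_0_if_height_bounded height_bounded_subset[OF bounded])
  qed
qed

lemma height_bounded_orbit_transfer:
  assumes quasi_aut: "\<And>g a b. g \<in> carrier Gr \<Longrightarrow>
      \<bar>rel_height H (\<phi> g a) (\<phi> g b) - rel_height H a b\<bar> \<le> d"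
    and "G \<subseteq> carrier Gr"
    and "height_bounded H {\<phi> g x | g. g \<in> G}"
  shows "height_bounded H {\<phi> g y | g. g \<in> G}"
proof -
  obtain m M where bounds: "\<And>g. g \<in> G \<Longrightarrow> m \<le> height H (\<phi> g x) \<and> height H (\<phi> g x) \<le> M"
    using assms(3) unfolding height_bounded_iff by blast
  have "m + rel_height H y x - d \<le> height H (\<phi> g y) \<and> height H (\<phi> g y) \<le> M + rel_height H y x + d"
    if "g \<in> G" for g
    using quasi_aut[of g y x] bounds[OF that] assms(2) that
    unfolding rel_height_def abs_le_iff by auto
  then show ?thesis
    unfolding height_bounded_iff by blast
qed

theorem theorem2p7:
  fixes leq :: "'x::topological_space \<Rightarrow> 'x \<Rightarrow> bool"
    and H :: "int \<Rightarrow> 'x set"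
    and Gr :: "('g, 'b) monoid_scheme"
    and \<phi> :: "'g \<Rightarrow> 'x \<Rightarrow> 'x"
    and G :: "'g set"
  assumes "half_space_order leq H"
    and "globally_hyperbolic leq"
    and "faithful_action Gr UNIV \<phi>"
    and "quasi_aut_action Gr \<phi> H"
    and "unbounded_action Gr \<phi> H"
    and "subgroup G Gr"
  shows "((\<forall>g \<in> G. translation_number Gr \<phi> H g = 0)
            \<longleftrightarrow> (\<forall>x. top_bounded {\<phi> g x | g. g \<in> G}))
       \<and> ((\<forall>x. top_bounded {\<phi> g x | g. g \<in> G})
            \<longleftrightarrow> (\<exists>x. top_bounded {\<phi> g x | g. g \<in> G}))"
proof -
  have action: "group_action Gr UNIV \<phi>"
    using assms(3) unfolding faithful_action_def by blast
  obtain d where quasi_aut: "\<And>g a b. g \<in> carrier Gr \<Longrightarrow>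
      \<bar>rel_height H (\<phi> g a) (\<phi> g b) - rel_height H a b\<bar> \<le> d"
    using assms(4) unfolding quasi_aut_action_def by blast
  have "G \<subseteq> carrier Gr"
    using assms(6) by (rule subgroup.subset)
  have "height_bounded H {\<phi> g x | g. g \<in> G}" if "height_bounded H {\<phi> g y | g. g \<in> G}" for x y
    using quasi_aut \<open>G \<subseteq> carrier Gr\<close> that by (rule height_bounded_orbit_transfer)
  then show ?thesis
    unfolding top_bounded_iff_height_bounded[OF assms(1,2)]
    using translation_numbers_vanish_iff[OF action quasi_aut assms(6)] by blast
qed

end
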